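(* Let $a>0$. For every $p\in(2,+\infty)$ there exist constants $M_p,\sigma_p,\gamma_p>0$ such that for every $x_0\in C^2([0,1])$, every $(d_0,d_1)\in\mathcal{U}(x_0)$ and every $t\ge0$, the classical solution $x$ of $\partial_tx(t,z)=a\,\partial_z^2x(t,z)$ on $(0,\infty)\times(0,1)$, $x(t,0)=d_0(t)$, $x(t,1)=d_1(t)$ for $t\ge0$, $x(0,z)=x_0(z)$ for $z\in[0,1]$, satisfies $\|x[t]\|_p\le M_pe^{-\sigma_pt}\|x_0\|_p+\gamma_p\max_{0\le s\le t}|d_0(s)|+\gamma_p\max_{0\le s\le t}|d_1(s)|$.
   Context: $\mathcal{U}(x_0)$ is the set of pairs $(d_0,d_1)\in C^2(\mathbb{R}_+)\times C^2(\mathbb{R}_+)$ with $d_0(0)=x_0(0)$, $d_1(0)=x_0(1)$, and $\sup_{t\ge0}|d_0(t)|<\infty$, $\sup_{t\ge0}|d_1(t)|<\infty$; for such data the problem has a unique classical solution $x\in C^0(\mathbb{R}_+\times[0,1])\cap C^{1,2}((0,\infty)\times(0,1))$ with $x[t]:=x(t,\cdot)\in C^2([0,1])$ for all $t\ge0$. $\|g\|_p=\left(\int_0^1|g(z)|^pdz\right)^{1/p}$. *)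

theory Defs
  imports "HOL-Analysis.Analysis"
begin

definition C2_on :: "real set \<Rightarrow> (real \<Rightarrow> real) \<Rightarrow> bool" where
  "C2_on S g \<longleftrightarrow> (\<exists>g1 g2.
      continuous_on S g \<and> continuous_on S g1 \<and> continuous_on S g2 \<and>
      (\<forall>z\<in>S. (g has_real_derivative g1 z) (at z within S)) \<and>
      (\<forall>z\<in>S. (g1 has_real_derivative g2 z) (at z within S)))"

definition Lp_norm :: "real \<Rightarrow> (real \<Rightarrow> real) \<Rightarrow> real" where
  "Lp_norm p g = (integral {0..1} (\<lambda>z. \<bar>g z\<bar> powr p)) powr (1 / p)"

definition admissible :: "(real \<Rightarrow> real) \<Rightarrow> (real \<Rightarrow> real) \<Rightarrow> (real \<Rightarrow> real) \<Rightarrow> bool" where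
  "admissible x0 d0 d1 \<longleftrightarrow>
     C2_on {0..} d0 \<and> C2_on {0..} d1 \<and> d0 0 = x0 0 \<and> d1 0 = x0 1 \<and>
     bounded (d0 ` {0..}) \<and> bounded (d1 ` {0..})"

definition classical_solution ::
  "real \<Rightarrow> (real \<Rightarrow> real) \<Rightarrow> (real \<Rightarrow> real) \<Rightarrow> (real \<Rightarrow> real) \<Rightarrow> (real \<Rightarrow> real \<Rightarrow> real) \<Rightarrow> bool" where
  "classical_solution a x0 d0 d1 x \<longleftrightarrow>
     continuous_on ({0..} \<times> {0..1}) (\<lambda>(t,z). x t z) \<and>
     (\<exists>xt xz xzz.
        continuous_on ({0<..} \<times> {0<..<1}) (\<lambda>(t,z). xt t z) \<and>
        continuous_on ({0<..} \<times> {0<..<1}) (\<lambda>(t,z). xz t z) \<and>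
        continuous_on ({0<..} \<times> {0<..<1}) (\<lambda>(t,z). xzz t z) \<and>
        (\<forall>t>0. \<forall>z\<in>{0<..<1}.
           ((\<lambda>s. x s z) has_real_derivative xt t z) (at t) \<and>
           ((\<lambda>y. x t y) has_real_derivative xz t z) (at z) \<and>
           ((\<lambda>y. xz t y) has_real_derivative xzz t z) (at z) \<and>
           xt t z = a * xzz t z)) \<and>
     (\<forall>t\<ge>0. C2_on {0..1} (x t)) \<and>
     (\<forall>t\<ge>0. x t 0 = d0 t \<and> x t 1 = d1 t) \<and>
     (\<forall>z\<in>{0..1}. x 0 z = x0 z)"

end

theory Submission
  imports Defs
begin

text \<open>Truncated L^p energy method. Let \<Phi>(s) = (|s| - D)_+^p, where D slightly exceeds the boundary
  data on [0, t]. By continuity of x up to the boundary, \<Phi>(x) vanishes on strips near z = 0 and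
  z = 1, so the energy E(s) = \<integral> \<Phi>(x(s, z)) dz can be differentiated and integrated by parts
  without boundary terms: E' = -a \<integral> \<Phi>''(x) x_z^2. Writing \<integral> \<Phi>(x) = -\<integral> \<Phi>'(x) x_z (z - 1/2) and
  applying Young's inequality gives the Poincare-type bound \<integral> \<Phi>(x) \<le> \<integral> \<Phi>''(x) x_z^2 / 2, hence
  E' \<le> -2 a E and E(t) \<le> exp(-2 a t) E(0). Finally |s|^p \<le> 2^p (D^p + \<Phi>(s)) turns this into the
  L^p estimate with M = \<gamma> = 2 and \<sigma> = 2 a / p.\<close>

lemma has_real_derivative_zero_if_powr_bound:
  fixes f :: "real \<Rightarrow> real"
  assumes f0: "f s0 = 0" and bound: "\<And>s. \<bar>f s\<bar> \<le> C * \<bar>s - s0\<bar> powr q" and q: "q > 1"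
  shows "(f has_real_derivative 0) (at s0)"
proof -
  have lim: "((\<lambda>y. \<bar>y - s0\<bar> powr (q - 1)) \<longlongrightarrow> 0) (at s0)"
    by (rule tendsto_zero_powrI) (auto intro!: tendsto_eq_intros simp: q)
  have "\<forall>\<^sub>F y in at s0. norm ((f y - f s0) / (y - s0)) \<le> norm (\<bar>y - s0\<bar> powr (q - 1)) * \<bar>C\<bar>"
  proof (rule eventually_at_topological[THEN iffD2], intro exI[of _ UNIV] conjI, simp, simp, intro ballI impI)
    fix y assume "y \<noteq> s0"
    then have pos: "\<bar>y - s0\<bar> > 0" by simp
    have "norm ((f y - f s0) / (y - s0)) = \<bar>f y\<bar> / \<bar>y - s0\<bar>" by (simp add: f0 abs_divide)
    also have "\<dots> \<le> C * \<bar>y - s0\<bar> powr q / \<bar>y - s0\<bar>"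
      using bound[of y] pos by (simp add: divide_right_mono)
    also have "\<dots> = C * \<bar>y - s0\<bar> powr (q - 1)"
      using pos by (simp add: powr_diff)
    also have "\<dots> \<le> norm (\<bar>y - s0\<bar> powr (q - 1)) * \<bar>C\<bar>"
      by (simp add: mult.commute mult_right_mono)
    finally show "norm ((f y - f s0) / (y - s0)) \<le> norm (\<bar>y - s0\<bar> powr (q - 1)) * \<bar>C\<bar>" .
  qed
  then show ?thesis
    unfolding has_field_derivative_iff by (rule tendsto_0_le[OF lim])
qed

lemma powr_add_le_add_powr:
  fixes u v r :: real
  assumes "u \<ge> 0" "v \<ge> 0" "0 < r" "r \<le> 1"
  shows "(u + v) powr r \<le> u powr r + v powr r"
proof (cases "u + v = 0")
  case False
  define w where "w = u + v"
  have w: "w > 0" using assms False by (simp add: w_def)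
  have "u / w \<le> (u / w) powr r" and "v / w \<le> (v / w) powr r"
    using powr_mono'[of r 1] assms w by (simp_all add: w_def)
  moreover have "u / w + v / w = 1" using w by (simp add: w_def add_divide_distrib[symmetric])
  ultimately have "w powr r * 1 \<le> w powr r * ((u / w) powr r + (v / w) powr r)"
    by (intro mult_left_mono) auto
  also have "\<dots> = u powr r + v powr r"
    using assms w by (simp add: powr_divide distrib_left)
  finally show ?thesis by (simp add: w_def)
qed (use assms in auto)

lemma exp_decay_if_deriv_le:
  fixes E E' :: "real \<Rightarrow> real"
  assumes T: "T \<ge> 0" and cont: "continuous_on {0..T} E"
    and deriv: "\<And>u. 0 < u \<Longrightarrow> u < T \<Longrightarrow> (E has_real_derivative E' u) (at u)"
    and deriv_le: "\<And>u. 0 < u \<Longrightarrow> u < T \<Longrightarrow> E' u \<le> - c * E u"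
  shows "E T \<le> exp (- c * T) * E 0"
proof -
  define H where "H u = exp (c * u) * E u" for u
  have "H T \<le> H 0"
  proof (cases "T = 0")
    case False
    then have T0: "0 < T" using T by simp
    have dH: "(H has_real_derivative exp (c * u) * (c * E u + E' u)) (at u)"
      if "0 < u" "u < T" for u
      unfolding H_def
      by (rule DERIV_mult[OF DERIV_chain2[OF DERIV_exp] deriv[OF that], THEN DERIV_cong])
         (auto intro!: derivative_eq_intros simp: algebra_simps)
    have "continuous_on {0..T} H"
      unfolding H_def by (intro continuous_intros cont)
    then obtain l z where z: "0 < z" "z < T" and dz: "DERIV H z :> l" and eq: "H T - H 0 = (T - 0) * l"
      using MVT[OF T0] dH by (meson real_differentiable_def)
    have "l = exp (c * z) * (c * E z + E' z)"
      using DERIV_unique[OF dz dH[OF z]] .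
    also have "\<dots> \<le> 0"
      using deriv_le[OF z] by (intro mult_nonneg_nonpos) auto
    finally have "(T - 0) * l \<le> 0" using T0 by (intro mult_nonneg_nonpos) auto
    then show ?thesis using eq by linarith
  qed simp
  then show ?thesis
    unfolding H_def by (simp add: exp_minus field_simps)
qed

lemma abs_le_SUP_abs:
  fixes d :: "real \<Rightarrow> real"
  assumes "bounded (d ` {0..})" "s \<in> {0..t}"
  shows "\<bar>d s\<bar> \<le> (SUP s\<in>{0..t}. \<bar>d s\<bar>)"
proof (rule cSUP_upper[OF assms(2)])
  obtain B where "\<And>y. y \<in> d ` {0..} \<Longrightarrow> norm y \<le> B"
    using assms(1) by (auto simp: bounded_iff)
  then show "bdd_above ((\<lambda>s. \<bar>d s\<bar>) ` {0..t})"
    by (intro bdd_aboveI[of _ B]) auto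
qed

lemma integral_eq_integral_subset_if_vanishing:
  fixes f :: "real \<Rightarrow> real"
  assumes "T \<subseteq> S" "\<And>z. z \<in> S - T \<Longrightarrow> f z = 0"
  shows "integral S f = integral T f"
proof -
  have "integral S f = integral S (\<lambda>z. if z \<in> T then f z else 0)"
    by (rule integral_cong) (use assms in auto)
  also have "\<dots> = integral (T \<inter> S) f"
    by (rule integral_restrict_Int)
  finally show ?thesis using assms(1) by (simp add: Int_absorb2)
qed

definition excess :: "real \<Rightarrow> real \<Rightarrow> real" where
  "excess D s = max 0 (\<bar>s\<bar> - D)"

definition excess_powr :: "real \<Rightarrow> real \<Rightarrow> real \<Rightarrow> real" where
  "excess_powr p D s = excess D s powr p"

definition excess_powr_deriv :: "real \<Rightarrow> real \<Rightarrow> real \<Rightarrow> real" where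
  "excess_powr_deriv p D s = p * sgn s * excess D s powr (p - 1)"

definition excess_powr_deriv2 :: "real \<Rightarrow> real \<Rightarrow> real \<Rightarrow> real" where
  "excess_powr_deriv2 p D s = p * (p - 1) * excess D s powr (p - 2)"

lemma excess_nonneg: "excess D s \<ge> 0"
  by (simp add: excess_def)

lemma excess_eq_0: "\<bar>s\<bar> \<le> D \<Longrightarrow> excess D s = 0"
  by (simp add: excess_def)

lemma excess_le_dist: "\<bar>s0\<bar> \<le> D \<Longrightarrow> excess D s \<le> \<bar>s - s0\<bar>"
  by (auto simp: excess_def)

lemma excess_powr_nonneg: "excess_powr p D s \<ge> 0"
  by (simp add: excess_powr_def)

lemma excess_powr_eq_0: "\<bar>s\<bar> \<le> D \<Longrightarrow> excess_powr p D s = 0"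
  by (simp add: excess_powr_def excess_eq_0)

lemma excess_powr_deriv_eq_0: "\<bar>s\<bar> \<le> D \<Longrightarrow> excess_powr_deriv p D s = 0"
  by (simp add: excess_powr_deriv_def excess_eq_0)

lemma excess_powr_le_abs_powr: "p > 0 \<Longrightarrow> D \<ge> 0 \<Longrightarrow> excess_powr p D s \<le> \<bar>s\<bar> powr p"
  unfolding excess_powr_def by (intro powr_mono2) (auto simp: excess_def)

lemma abs_powr_le_excess_powr:
  assumes p: "p > 0" and D: "D > 0"
  shows "\<bar>s\<bar> powr p \<le> 2 powr p * (D powr p + excess_powr p D s)"
proof -
  let ?y = "excess D s"
  have "\<bar>s\<bar> \<le> 2 * max D ?y" using D by (auto simp: excess_def max_def)
  then have "\<bar>s\<bar> powr p \<le> (2 * max D ?y) powr p" using p by (intro powr_mono2) auto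
  also have "\<dots> = 2 powr p * max D ?y powr p" using D excess_nonneg[of D s] by (simp add: powr_mult)
  also have "max D ?y powr p \<le> D powr p + ?y powr p"
    by (cases "D \<le> ?y") (auto simp: max_def)
  finally show ?thesis by (simp add: excess_powr_def)
qed

text \<open>On the plateau |s| \<le> D both functions are flat of order p > 2 and p - 1 > 1 respectively.\<close>
lemma has_real_derivative_excess_powr:
  assumes p: "p > 2" and D: "D \<ge> 0"
  shows "(excess_powr p D has_real_derivative excess_powr_deriv p D s) (at s)"
proof -
  consider "\<bar>s\<bar> \<le> D" | "s > D" | "s < -D" by linarith
  then show ?thesis
  proof cases
    case 1
    have "(excess_powr p D has_real_derivative 0) (at s)"
    proof (rule has_real_derivative_zero_if_powr_bound[where C=1 and q=p])
      fix y show "\<bar>excess_powr p D y\<bar> \<le> 1 * \<bar>y - s\<bar> powr p"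
        using excess_le_dist[OF 1, of y] excess_nonneg[of D y] p
        by (simp add: excess_powr_def powr_mono2)
    qed (use 1 p in \<open>auto simp: excess_powr_eq_0\<close>)
    then show ?thesis using 1 by (simp add: excess_powr_deriv_eq_0)
  next
    case 2
    have d: "((\<lambda>y. (y - D) powr p) has_real_derivative p * (s - D) powr (p - 1) * 1) (at s)"
      by (rule DERIV_powr[THEN DERIV_cong]) (use 2 in \<open>auto intro!: derivative_eq_intros simp: powr_diff power2_eq_square\<close>)
    have e: "excess_powr_deriv p D s = p * (s - D) powr (p - 1) * 1"
      using 2 D by (simp add: excess_powr_deriv_def excess_def sgn_if)
    show ?thesis unfolding e
      by (rule has_field_derivative_transform_within_open[OF d, of "{D<..}"])
         (use 2 D in \<open>auto simp: excess_powr_def excess_powr_deriv_def excess_def\<close>)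
  next
    case 3
    have d: "((\<lambda>y. (- y - D) powr p) has_real_derivative p * (- s - D) powr (p - 1) * (-1)) (at s)"
      by (rule DERIV_powr[THEN DERIV_cong]) (use 3 in \<open>auto intro!: derivative_eq_intros simp: powr_diff power2_eq_square field_simps\<close>)
    have e: "excess_powr_deriv p D s = p * (- s - D) powr (p - 1) * (-1)"
      using 3 D by (simp add: excess_powr_deriv_def excess_def sgn_if)
    show ?thesis unfolding e
      by (rule has_field_derivative_transform_within_open[OF d, of "{..<-D}"])
         (use 3 D in \<open>auto simp: excess_powr_def excess_powr_deriv_def excess_def\<close>)
  qed
qed

lemma has_real_derivative_excess_powr_deriv:
  assumes p: "p > 2" and D: "D \<ge> 0"
  shows "(excess_powr_deriv p D has_real_derivative excess_powr_deriv2 p D s) (at s)"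
proof -
  consider "\<bar>s\<bar> \<le> D" | "s > D" | "s < -D" by linarith
  then show ?thesis
  proof cases
    case 1
    have "(excess_powr_deriv p D has_real_derivative 0) (at s)"
    proof (rule has_real_derivative_zero_if_powr_bound[where C=p and q="p-1"])
      fix y
      have "\<bar>excess_powr_deriv p D y\<bar> \<le> p * excess D y powr (p - 1)"
        using p by (auto simp: excess_powr_deriv_def abs_mult sgn_if)
      also have "\<dots> \<le> p * \<bar>y - s\<bar> powr (p - 1)"
        using excess_le_dist[OF 1, of y] excess_nonneg[of D y] p
        by (intro mult_left_mono powr_mono2) auto
      finally show "\<bar>excess_powr_deriv p D y\<bar> \<le> p * \<bar>y - s\<bar> powr (p - 1)" .
    qed (use 1 p in \<open>auto simp: excess_powr_deriv_eq_0\<close>)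
    then show ?thesis using 1 by (simp add: excess_powr_deriv2_def excess_eq_0)
  next
    case 2
    have d: "((\<lambda>y. p * (y - D) powr (p - 1)) has_real_derivative
              p * ((p - 1) * (s - D) powr (p - 1 - 1) * 1)) (at s)"
      by (intro DERIV_cmult DERIV_powr[THEN DERIV_cong]) (use 2 in \<open>auto intro!: derivative_eq_intros simp: powr_diff power2_eq_square\<close>)
    have e: "excess_powr_deriv2 p D s = p * ((p - 1) * (s - D) powr (p - 1 - 1) * 1)"
      using 2 D by (simp add: excess_powr_deriv2_def excess_def sgn_if)
    show ?thesis unfolding e
      by (rule has_field_derivative_transform_within_open[OF d, of "{D<..}"])
         (use 2 D in \<open>auto simp: excess_powr_deriv_def excess_powr_deriv2_def excess_def\<close>)
  next
    case 3
    have d: "((\<lambda>y. - p * (- y - D) powr (p - 1)) has_real_derivative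
              - p * ((p - 1) * (- s - D) powr (p - 1 - 1) * (-1))) (at s)"
      by (intro DERIV_cmult DERIV_powr[THEN DERIV_cong]) (use 3 in \<open>auto intro!: derivative_eq_intros simp: powr_diff power2_eq_square field_simps\<close>)
    have e: "excess_powr_deriv2 p D s = - p * ((p - 1) * (- s - D) powr (p - 1 - 1) * (-1))"
      using 3 D by (simp add: excess_powr_deriv2_def excess_def sgn_if)
    show ?thesis unfolding e
      by (rule has_field_derivative_transform_within_open[OF d, of "{..<-D}"])
         (use 3 D in \<open>auto simp: excess_powr_deriv_def excess_powr_deriv2_def excess_def\<close>)
  qed
qed

lemma continuous_on_excess_powr: "p > 2 \<Longrightarrow> D \<ge> 0 \<Longrightarrow> continuous_on S (excess_powr p D)"
  by (meson DERIV_isCont continuous_at_imp_continuous_on has_real_derivative_excess_powr)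

lemma continuous_on_excess_powr_deriv: "p > 2 \<Longrightarrow> D \<ge> 0 \<Longrightarrow> continuous_on S (excess_powr_deriv p D)"
  by (meson DERIV_isCont continuous_at_imp_continuous_on has_real_derivative_excess_powr_deriv)

text \<open>Young's inequality u v \<le> u^2/2 + v^2/2 for u = excess^(p/2), v = (p/2) excess^(p/2 - 1) |g|,
  followed by p^2/8 \<le> p (p - 1)/4.\<close>
lemma excess_powr_young:
  assumes p: "p \<ge> 2" and q: "\<bar>q\<bar> \<le> 1/2"
  shows "- (excess_powr_deriv p D s * g * q) \<le> excess_powr p D s / 2 + excess_powr_deriv2 p D s * g\<^sup>2 / 4"
proof -
  define y where "y = excess D s"
  define u where "u = y powr (p/2)"
  define v where "v = y powr (p/2 - 1) * \<bar>g\<bar>"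
  have y0: "y \<ge> 0" by (simp add: y_def excess_nonneg)
  have uv: "y powr (p - 1) * \<bar>g\<bar> = u * v"
    unfolding u_def v_def by (simp add: powr_add[symmetric] mult.assoc)
  have uu: "u\<^sup>2 = y powr p"
    unfolding u_def power2_eq_square by (simp add: powr_add[symmetric])
  have vv: "v\<^sup>2 = y powr (p - 2) * g\<^sup>2"
    unfolding v_def power2_eq_square by (simp add: powr_add[symmetric] mult_ac abs_mult_self)
  have "- (excess_powr_deriv p D s * g * q) \<le> \<bar>excess_powr_deriv p D s * g * q\<bar>" by simp
  also have "\<dots> \<le> p * y powr (p - 1) * \<bar>g\<bar> * (1/2)"
    unfolding excess_powr_deriv_def y_def[symmetric] abs_mult using p q y0
    by (intro mult_mono) (auto simp: sgn_if)
  also have "\<dots> = (p/2) * (u * v)" using uv by (simp add: mult_ac)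
  also have "\<dots> \<le> u\<^sup>2 / 2 + (p * p / 8) * v\<^sup>2"
    using sum_power2_ge_zero[of "u - (p/2) * v" 0] by (simp add: power2_eq_square algebra_simps)
  also have "\<dots> \<le> u\<^sup>2 / 2 + (p * (p - 1) / 4) * v\<^sup>2"
    using p by (intro add_left_mono mult_right_mono) (auto simp: field_simps)
  also have "\<dots> = excess_powr p D s / 2 + excess_powr_deriv2 p D s * g\<^sup>2 / 4"
    unfolding uu vv excess_powr_def excess_powr_deriv2_def y_def by (simp add: mult_ac)
  finally show ?thesis .
qed

lemma has_integral_deriv_0_if_vanishing_at_ends:
  fixes F F' :: "real \<Rightarrow> real"
  assumes "l \<le> r" and deriv: "\<And>z. z \<in> {l..r} \<Longrightarrow> (F has_real_derivative F' z) (at z)"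
    and "F l = 0" "F r = 0"
  shows "(F' has_integral 0) {l..r}"
proof -
  have "(F' has_integral (F r - F l)) {l..r}"
  proof (rule fundamental_theorem_of_calculus[OF \<open>l \<le> r\<close>])
    fix z assume "z \<in> {l..r}"
    then show "(F has_vector_derivative F' z) (at z within {l..r})"
      using deriv by (simp add: has_real_derivative_iff_has_vector_derivative has_vector_derivative_at_within)
  qed
  then show ?thesis using assms by simp
qed

text \<open>The weight z - 1/2, bounded by 1/2 on [0, 1], is where the Poincare constant comes from.\<close>
lemma integral_excess_powr_deriv_mult_second_deriv_le:
  fixes X Xz Xzz :: "real \<Rightarrow> real"
  assumes p: "p > 2" and D: "D \<ge> 0" and lr: "0 \<le> l" "l \<le> r" "r \<le> 1"
    and dX: "\<And>z. z \<in> {l..r} \<Longrightarrow> (X has_real_derivative Xz z) (at z)"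
    and dXz: "\<And>z. z \<in> {l..r} \<Longrightarrow> (Xz has_real_derivative Xzz z) (at z)"
    and cXzz: "continuous_on {l..r} Xzz"
    and ends: "\<bar>X l\<bar> \<le> D" "\<bar>X r\<bar> \<le> D"
  shows "integral {l..r} (\<lambda>z. excess_powr_deriv p D (X z) * Xzz z)
           \<le> - 2 * integral {l..r} (\<lambda>z. excess_powr p D (X z))"
proof -
  let ?\<Phi> = "excess_powr p D" and ?\<Phi>' = "excess_powr_deriv p D" and ?\<Phi>'' = "excess_powr_deriv2 p D"
  have cX: "continuous_on {l..r} X" and cXz: "continuous_on {l..r} Xz"
    using dX dXz by (meson DERIV_isCont continuous_at_imp_continuous_on)+
  have c\<Phi>: "continuous_on {l..r} (\<lambda>z. ?\<Phi> (X z))"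
    using continuous_on_compose2[OF continuous_on_excess_powr[OF p D] cX] by auto
  have c\<Phi>': "continuous_on {l..r} (\<lambda>z. ?\<Phi>' (X z))"
    using continuous_on_compose2[OF continuous_on_excess_powr_deriv[OF p D] cX] by auto
  define I1 where "I1 = integral {l..r} (\<lambda>z. ?\<Phi>' (X z) * Xzz z)"
  define I2 where "I2 = integral {l..r} (\<lambda>z. ?\<Phi>'' (X z) * (Xz z)\<^sup>2)"
  define I3 where "I3 = integral {l..r} (\<lambda>z. ?\<Phi> (X z))"
  define I4 where "I4 = integral {l..r} (\<lambda>z. ?\<Phi>' (X z) * Xz z * (z - 1/2))"
  have i1: "(\<lambda>z. ?\<Phi>' (X z) * Xzz z) integrable_on {l..r}"
    by (intro integrable_continuous_interval continuous_on_mult c\<Phi>' cXzz)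
  have i3: "(\<lambda>z. ?\<Phi> (X z)) integrable_on {l..r}"
    by (intro integrable_continuous_interval c\<Phi>)
  have i4: "(\<lambda>z. ?\<Phi>' (X z) * Xz z * (z - 1/2)) integrable_on {l..r}"
    by (intro integrable_continuous_interval continuous_on_mult c\<Phi>' cXz continuous_intros)
  have parts1: "((\<lambda>z. ?\<Phi>'' (X z) * (Xz z)\<^sup>2 + ?\<Phi>' (X z) * Xzz z) has_integral 0) {l..r}"
  proof (rule has_integral_deriv_0_if_vanishing_at_ends[where F="\<lambda>z. ?\<Phi>' (X z) * Xz z"])
    fix z assume z: "z \<in> {l..r}"
    show "((\<lambda>z. ?\<Phi>' (X z) * Xz z) has_real_derivative ?\<Phi>'' (X z) * (Xz z)\<^sup>2 + ?\<Phi>' (X z) * Xzz z) (at z)"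
      by (rule DERIV_mult[OF DERIV_chain2[OF has_real_derivative_excess_powr_deriv[OF p D] dX[OF z]] dXz[OF z],
            THEN DERIV_cong]) (simp add: power2_eq_square)
  qed (use lr ends in \<open>auto simp: excess_powr_deriv_eq_0\<close>)
  have i2: "(\<lambda>z. ?\<Phi>'' (X z) * (Xz z)\<^sup>2) integrable_on {l..r}"
    using integrable_diff[OF has_integral_integrable[OF parts1] i1] by simp
  have parts2: "((\<lambda>z. ?\<Phi>' (X z) * Xz z * (z - 1/2) + ?\<Phi> (X z)) has_integral 0) {l..r}"
  proof (rule has_integral_deriv_0_if_vanishing_at_ends[where F="\<lambda>z. ?\<Phi> (X z) * (z - 1/2)"])
    fix z assume z: "z \<in> {l..r}"
    show "((\<lambda>z. ?\<Phi> (X z) * (z - 1/2)) has_real_derivative ?\<Phi>' (X z) * Xz z * (z - 1/2) + ?\<Phi> (X z)) (at z)"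
      by (rule DERIV_mult[OF DERIV_chain2[OF has_real_derivative_excess_powr[OF p D] dX[OF z]]
            DERIV_diff[OF DERIV_ident DERIV_const], THEN DERIV_cong]) simp
  qed (use lr ends in \<open>auto simp: excess_powr_eq_0\<close>)
  have "I2 + I1 = 0"
    using integral_unique[OF parts1] integral_add[OF i2 i1] by (simp add: I1_def I2_def)
  moreover have "I4 + I3 = 0"
    using integral_unique[OF parts2] integral_add[OF i4 i3] by (simp add: I3_def I4_def)
  moreover have "- I4 \<le> I3 / 2 + I2 / 4"
  proof -
    have "integral {l..r} (\<lambda>z. - (?\<Phi>' (X z) * Xz z * (z - 1/2)))
        \<le> integral {l..r} (\<lambda>z. ?\<Phi> (X z) / 2 + ?\<Phi>'' (X z) * (Xz z)\<^sup>2 / 4)"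
    proof (rule integral_le)
      fix z assume "z \<in> {l..r}"
      then have "\<bar>z - 1/2\<bar> \<le> 1/2" using lr by (auto simp: abs_if)
      then show "- (?\<Phi>' (X z) * Xz z * (z - 1/2)) \<le> ?\<Phi> (X z) / 2 + ?\<Phi>'' (X z) * (Xz z)\<^sup>2 / 4"
        using p by (intro excess_powr_young) auto
    qed (intro integrable_neg integrable_add integrable_on_divide i2 i3 i4)+
    then show ?thesis
      using integral_add[OF integrable_on_divide[OF i3] integrable_on_divide[OF i2]]
      by (simp add: I2_def I3_def I4_def)
  qed
  ultimately show ?thesis by (simp add: I1_def I3_def)
qed

lemma has_real_derivative_integral_comp:
  fixes F F' :: "real \<Rightarrow> real" and x xt :: "real \<Rightarrow> real \<Rightarrow> real"
  assumes dF: "\<And>y. (F has_real_derivative F' y) (at y)" and cF': "continuous_on UNIV F'"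
    and cx: "continuous_on ({0<..} \<times> {l..r}) (\<lambda>(t, z). x t z)"
    and cxt: "continuous_on ({0<..} \<times> {l..r}) (\<lambda>(t, z). xt t z)"
    and dx: "\<And>t z. 0 < t \<Longrightarrow> z \<in> {l..r} \<Longrightarrow> ((\<lambda>s. x s z) has_real_derivative xt t z) (at t)"
    and s: "0 < s"
  shows "((\<lambda>t. integral {l..r} (\<lambda>z. F (x t z))) has_real_derivative
           integral {l..r} (\<lambda>z. F' (x s z) * xt s z)) (at s)"
proof -
  define U where "U = {s / 2 .. 2 * s}"
  have U: "U \<subseteq> {0<..}" using s by (auto simp: U_def)
  have cF: "continuous_on UNIV F"
    using dF by (meson DERIV_isCont continuous_at_imp_continuous_on)
  have cFx: "continuous_on ({0<..} \<times> {l..r}) (\<lambda>(t, z). F (x t z))"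
    using continuous_on_compose2[OF cF cx] by (simp add: case_prod_beta)
  have "((\<lambda>t. integral (cbox l r) (\<lambda>z. F (x t z))) has_real_derivative
           integral (cbox l r) (\<lambda>z. F' (x s z) * xt s z)) (at s within U)"
  proof (rule leibniz_rule_field_derivative)
    fix u z assume u: "u \<in> U" and z: "z \<in> cbox l r"
    have "((\<lambda>u. F (x u z)) has_real_derivative F' (x u z) * xt u z) (at u)"
      using DERIV_chain2[OF dF dx] u z U by (auto simp: cbox_interval)
    then show "((\<lambda>u. F (x u z)) has_field_derivative F' (x u z) * xt u z) (at u within U)"
      by (rule has_field_derivative_at_within)
  next
    fix u assume "u \<in> U"
    then have "continuous_on {l..r} ((\<lambda>(t, z). F (x t z)) \<circ> Pair u)"
      using U by (intro continuous_on_o_Pair[OF cFx]) auto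
    then show "(\<lambda>z. F (x u z)) integrable_on cbox l r"
      by (simp add: cbox_interval o_def integrable_continuous_interval)
  next
    have "continuous_on ({0<..} \<times> {l..r}) (\<lambda>(t, z). F' (x t z) * xt t z)"
      using continuous_on_mult[OF continuous_on_compose2[OF cF' cx] cxt] by (simp add: case_prod_beta)
    then show "continuous_on (U \<times> cbox l r) (\<lambda>(u, z). F' (x u z) * xt u z)"
      by (rule continuous_on_subset) (use U in \<open>auto simp: cbox_interval\<close>)
  next
    show "s \<in> U" "convex U" using s by (auto simp: U_def)
  qed
  moreover have "at s within U = at s"
    unfolding U_def using s by (intro at_within_Icc_at) auto
  ultimately show ?thesis by (simp add: cbox_interval)
qed

lemma boundary_strip_bound:
  fixes x :: "real \<Rightarrow> real \<Rightarrow> real"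
  assumes cx: "continuous_on ({0..} \<times> {0..1}) (\<lambda>(t, z). x t z)"
    and ends: "\<And>s. s \<in> {0..t} \<Longrightarrow> \<bar>x s 0\<bar> \<le> D \<and> \<bar>x s 1\<bar> \<le> D" and \<eta>: "\<eta> > 0"
  obtains \<delta> where "0 < \<delta>" "\<delta> < 1/2"
    "\<And>s z. s \<in> {0..t} \<Longrightarrow> z \<in> {0..1} \<Longrightarrow> z \<le> \<delta> \<or> 1 - \<delta> \<le> z \<Longrightarrow> \<bar>x s z\<bar> \<le> D + \<eta>"
proof -
  have "uniformly_continuous_on ({0..t} \<times> {0..1}) (\<lambda>(t, z). x t z)"
    by (rule compact_uniformly_continuous[OF continuous_on_subset[OF cx]])
       (auto intro: compact_Times)
  then obtain d where d: "d > 0" and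
    dd: "\<And>u v. u \<in> {0..t} \<times> {0..1} \<Longrightarrow> v \<in> {0..t} \<times> {0..1} \<Longrightarrow> dist u v < d \<Longrightarrow>
          dist ((\<lambda>(t, z). x t z) u) ((\<lambda>(t, z). x t z) v) < \<eta>"
    using \<eta> unfolding uniformly_continuous_on_def by metis
  define \<delta> where "\<delta> = min (d/2) (1/4)"
  have near: "\<bar>x s z\<bar> \<le> D + \<eta>"
    if s: "s \<in> {0..t}" and z: "z \<in> {0..1}" and w: "w \<in> {0, 1}" and zw: "\<bar>z - w\<bar> \<le> \<delta>" for s z w
  proof -
    have "dist (s, z) (s, w) < d" using zw d by (simp add: dist_Pair_Pair dist_real_def \<delta>_def)
    then have "\<bar>x s z - x s w\<bar> < \<eta>" using dd[of "(s, z)" "(s, w)"] s z w by (auto simp: dist_real_def)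
    moreover have "\<bar>x s w\<bar> \<le> D" using ends[OF s] w by auto
    ultimately show ?thesis by linarith
  qed
  show ?thesis
  proof
    show "0 < \<delta>" "\<delta> < 1/2" using d by (auto simp: \<delta>_def)
    fix s z assume "s \<in> {0..t}" "z \<in> {0..1}" "z \<le> \<delta> \<or> 1 - \<delta> \<le> z"
    then show "\<bar>x s z\<bar> \<le> D + \<eta>"
      using near[of s z 0] near[of s z 1] by (auto simp: abs_if)
  qed
qed

text \<open>The energy is computed on [\<delta>, 1 - \<delta>], where the equation holds classically up to the ends; by
  the strip bound nothing is lost outside this interval.\<close>
lemma integral_excess_powr_solution_decay:
  fixes x :: "real \<Rightarrow> real \<Rightarrow> real"
  assumes a: "a \<ge> 0" and p: "p > 2" and D: "D \<ge> 0" and \<delta>: "0 < \<delta>" "\<delta> < 1/2" and T: "T \<ge> 0"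
    and sol: "classical_solution a x0 d0 d1 x"
    and strip: "\<And>s z. s \<in> {0..T} \<Longrightarrow> z \<in> {0..1} \<Longrightarrow> z \<le> \<delta> \<or> 1 - \<delta> \<le> z \<Longrightarrow> \<bar>x s z\<bar> \<le> D"
  shows "integral {0..1} (\<lambda>z. excess_powr p D (x T z))
           \<le> exp (- 2 * a * T) * integral {0..1} (\<lambda>z. excess_powr p D (x 0 z))"
proof -
  obtain xt xz xzz where
    cxt: "continuous_on ({0<..} \<times> {0<..<1}) (\<lambda>(t, z). xt t z)" and
    cxzz: "continuous_on ({0<..} \<times> {0<..<1}) (\<lambda>(t, z). xzz t z)" and
    der: "\<And>t z. t > 0 \<Longrightarrow> z \<in> {0<..<1} \<Longrightarrow>
           ((\<lambda>s. x s z) has_real_derivative xt t z) (at t) \<and>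
           ((\<lambda>y. x t y) has_real_derivative xz t z) (at z) \<and>
           ((\<lambda>y. xz t y) has_real_derivative xzz t z) (at z) \<and>
           xt t z = a * xzz t z"
    using sol unfolding classical_solution_def by blast
  have cx: "continuous_on ({0..} \<times> {0..1}) (\<lambda>(t, z). x t z)"
    using sol by (simp add: classical_solution_def)
  have sub: "{\<delta>..1-\<delta>} \<subseteq> {0<..<1}" using \<delta> by auto
  define E where "E s = integral {\<delta>..1-\<delta>} (\<lambda>z. excess_powr p D (x s z))" for s
  define E' where "E' s = integral {\<delta>..1-\<delta>} (\<lambda>z. excess_powr_deriv p D (x s z) * xt s z)" for s
  have restrict: "integral {0..1} (\<lambda>z. excess_powr p D (x s z)) = E s" if "s \<in> {0..T}" for s
    unfolding E_def
  proof (rule integral_eq_integral_subset_if_vanishing)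
    show "{\<delta>..1-\<delta>} \<subseteq> {0..1}" using \<delta> by auto
    fix z assume "z \<in> {0..1} - {\<delta>..1-\<delta>}"
    then show "excess_powr p D (x s z) = 0"
      using strip[OF that, of z] by (intro excess_powr_eq_0) auto
  qed
  have "E T \<le> exp (- (2 * a) * T) * E 0"
  proof (rule exp_decay_if_deriv_le[where E'=E', OF T])
    have "continuous_on ({0..T} \<times> {\<delta>..1-\<delta>}) (\<lambda>(s, z). x s z)"
      by (rule continuous_on_subset[OF cx]) (use \<delta> in auto)
    then have "continuous_on ({0..T} \<times> cbox \<delta> (1-\<delta>)) (\<lambda>(s, z). excess_powr p D (x s z))"
      using continuous_on_compose2[OF continuous_on_excess_powr[OF p D, where S=UNIV]]
      by (simp add: case_prod_beta cbox_interval)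
    from integral_continuous_on_param[OF this] show "continuous_on {0..T} E"
      by (simp add: E_def cbox_interval)
  next
    fix u assume u: "0 < u" and uT: "u < T"
    show "(E has_real_derivative E' u) (at u)"
      unfolding E_def E'_def
    proof (rule has_real_derivative_integral_comp[OF has_real_derivative_excess_powr[OF p D]
          continuous_on_excess_powr_deriv[OF p D] _ _ _ u])
      show "continuous_on ({0<..} \<times> {\<delta>..1-\<delta>}) (\<lambda>(t, z). x t z)"
        by (rule continuous_on_subset[OF cx]) (use \<delta> in auto)
      show "continuous_on ({0<..} \<times> {\<delta>..1-\<delta>}) (\<lambda>(t, z). xt t z)"
        by (rule continuous_on_subset[OF cxt]) (use sub in auto)
      show "\<And>t z. 0 < t \<Longrightarrow> z \<in> {\<delta>..1-\<delta>} \<Longrightarrow> ((\<lambda>s. x s z) has_real_derivative xt t z) (at t)"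
        using der sub by blast
    qed
    have "E' u = integral {\<delta>..1-\<delta>} (\<lambda>z. a * (excess_powr_deriv p D (x u z) * xzz u z))"
      unfolding E'_def
    proof (rule integral_cong)
      fix z assume "z \<in> {\<delta>..1-\<delta>}"
      then have "xt u z = a * xzz u z" using der[OF u] sub by blast
      then show "excess_powr_deriv p D (x u z) * xt u z = a * (excess_powr_deriv p D (x u z) * xzz u z)"
        by simp
    qed
    also have "\<dots> = a * integral {\<delta>..1-\<delta>} (\<lambda>z. excess_powr_deriv p D (x u z) * xzz u z)"
      by (rule integral_mult_right)
    also have "\<dots> \<le> a * (- 2 * E u)"
      unfolding E_def
    proof (intro mult_left_mono[OF _ a] integral_excess_powr_deriv_mult_second_deriv_le[OF p D, where Xz="xz u"])
      have "continuous_on {0<..<1} (xzz u)"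
        using continuous_on_o_Pair[OF cxzz, of u] u by (simp add: o_def)
      then show "continuous_on {\<delta>..1-\<delta>} (xzz u)" by (rule continuous_on_subset) (rule sub)
      show "\<bar>x u \<delta>\<bar> \<le> D" "\<bar>x u (1 - \<delta>)\<bar> \<le> D" using strip u uT \<delta> by auto
      show "\<And>z. z \<in> {\<delta>..1-\<delta>} \<Longrightarrow> (x u has_real_derivative xz u z) (at z)"
        "\<And>z. z \<in> {\<delta>..1-\<delta>} \<Longrightarrow> (xz u has_real_derivative xzz u z) (at z)"
        using der[OF u] sub by blast+
    qed (use \<delta> in auto)
    finally show "E' u \<le> - (2 * a) * E u" by simp
  qed
  then show ?thesis using restrict T by simp
qed

lemma abs_powr_integrable_on_unit:
  fixes f :: "real \<Rightarrow> real"
  assumes "continuous_on {0..1} f" "p > 0"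
  shows "(\<lambda>z. \<bar>f z\<bar> powr p) integrable_on {0..1}"
  using assms by (intro integrable_continuous_interval continuous_on_powr' continuous_intros) auto

lemma integrable_excess_powr_comp:
  fixes f :: "real \<Rightarrow> real"
  assumes "continuous_on {0..1} f" "p > 2" "D \<ge> 0"
  shows "(\<lambda>z. excess_powr p D (f z)) integrable_on {0..1}"
  using continuous_on_compose2[OF continuous_on_excess_powr[OF assms(2,3), where S=UNIV] assms(1)]
  by (intro integrable_continuous_interval) simp

lemma integral_excess_powr_le_integral_abs_powr:
  fixes f :: "real \<Rightarrow> real"
  assumes f: "continuous_on {0..1} f" and p: "p > 2" and D: "D \<ge> 0"
  shows "integral {0..1} (\<lambda>z. excess_powr p D (f z)) \<le> integral {0..1} (\<lambda>z. \<bar>f z\<bar> powr p)"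
  using p D by (intro integral_le integrable_excess_powr_comp[OF f] abs_powr_integrable_on_unit[OF f]
      excess_powr_le_abs_powr) auto

lemma Lp_norm_le_integral_excess_powr:
  fixes f :: "real \<Rightarrow> real"
  assumes f: "continuous_on {0..1} f" and p: "p > 2" and D: "D > 0"
  shows "Lp_norm p f \<le> 2 * (D + integral {0..1} (\<lambda>z. excess_powr p D (f z)) powr (1/p))"
proof -
  define E where "E = integral {0..1} (\<lambda>z. excess_powr p D (f z))"
  have iE: "(\<lambda>z. excess_powr p D (f z)) integrable_on {0..1}"
    using integrable_excess_powr_comp[OF f p] D by simp
  have E0: "E \<ge> 0"
    unfolding E_def by (rule integral_nonneg[OF iE]) (simp add: excess_powr_nonneg)
  have "integral {0..1} (\<lambda>z. \<bar>f z\<bar> powr p) \<le> integral {0..1} (\<lambda>z. 2 powr p * (D powr p + excess_powr p D (f z)))"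
    using p D by (intro integral_le abs_powr_integrable_on_unit[OF f] abs_powr_le_excess_powr
        integrable_on_mult_right integrable_add integrable_const_ivl iE) auto
  also have "\<dots> = 2 powr p * (D powr p + E)"
    using integral_add[OF integrable_const_ivl iE] by (simp add: E_def)
  finally have "Lp_norm p f \<le> (2 powr p * (D powr p + E)) powr (1/p)"
    unfolding Lp_norm_def using p
    by (intro powr_mono2 integral_nonneg abs_powr_integrable_on_unit[OF f]) auto
  also have "\<dots> = 2 * (D powr p + E) powr (1/p)"
    using p E0 by (simp add: powr_mult powr_powr)
  also have "(D powr p + E) powr (1/p) \<le> (D powr p) powr (1/p) + E powr (1/p)"
    using p E0 by (intro powr_add_le_add_powr) auto
  finally show ?thesis
    using p D by (simp add: powr_powr E_def)
qed

lemma Lp_norm_solution_le: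
  fixes x :: "real \<Rightarrow> real \<Rightarrow> real"
  assumes a: "a \<ge> 0" and p: "p > 2" and sol: "classical_solution a x0 d0 d1 x" and t: "t \<ge> 0"
    and ends: "\<And>s. s \<in> {0..t} \<Longrightarrow> \<bar>d0 s\<bar> \<le> D \<and> \<bar>d1 s\<bar> \<le> D"
  shows "Lp_norm p (x t) \<le> 2 * exp (- (2 * a / p) * t) * Lp_norm p x0 + 2 * D"
proof (rule field_le_epsilon)
  fix \<epsilon> :: real assume \<epsilon>: "\<epsilon> > 0"
  have cx: "continuous_on ({0..} \<times> {0..1}) (\<lambda>(t, z). x t z)"
    using sol by (simp add: classical_solution_def)
  have x_ends: "\<And>s. s \<in> {0..t} \<Longrightarrow> \<bar>x s 0\<bar> \<le> D \<and> \<bar>x s 1\<bar> \<le> D"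
    using sol ends by (simp add: classical_solution_def)
  have cxs: "continuous_on {0..1} (x s)" if "s \<ge> 0" for s
    using continuous_on_o_Pair[OF cx, of s] that by (simp add: o_def)
  define D' where "D' = D + \<epsilon> / 2"
  have D': "D' > 0" using ends[of 0] t \<epsilon> by (auto simp: D'_def)
  obtain \<delta> where \<delta>: "0 < \<delta>" "\<delta> < 1/2"
    and strip: "\<And>s z. s \<in> {0..t} \<Longrightarrow> z \<in> {0..1} \<Longrightarrow> z \<le> \<delta> \<or> 1 - \<delta> \<le> z \<Longrightarrow> \<bar>x s z\<bar> \<le> D'"
    using boundary_strip_bound[OF cx x_ends, where \<eta>="\<epsilon> / 2"] \<epsilon> by (auto simp: D'_def)
  define E where "E s = integral {0..1} (\<lambda>z. excess_powr p D' (x s z))" for s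
  define I0 where "I0 = integral {0..1} (\<lambda>z. \<bar>x 0 z\<bar> powr p)"
  have "integral {0..1} (\<lambda>z. \<bar>x0 z\<bar> powr p) = I0"
    unfolding I0_def using sol by (intro integral_cong) (simp add: classical_solution_def)
  then have "Lp_norm p x0 = I0 powr (1/p)"
    by (simp add: Lp_norm_def)
  have "E t \<le> exp (- 2 * a * t) * E 0"
    using integral_excess_powr_solution_decay[OF a p _ \<delta> t sol strip] D' by (simp add: E_def)
  also have "\<dots> \<le> exp (- 2 * a * t) * I0"
    unfolding E_def I0_def using D' by (intro mult_left_mono integral_excess_powr_le_integral_abs_powr cxs p) auto
  finally have "E t powr (1/p) \<le> (exp (- 2 * a * t) * I0) powr (1/p)"
    using p D' integral_nonneg[OF integrable_excess_powr_comp[OF cxs[OF t] p]] excess_powr_nonneg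
    by (intro powr_mono2) (auto simp: E_def)
  also have "\<dots> = exp (- (2 * a / p) * t) * Lp_norm p x0"
    using integral_nonneg[OF abs_powr_integrable_on_unit[OF cxs, of 0 p]] \<open>Lp_norm p x0 = I0 powr (1/p)\<close>
    by (simp add: powr_mult exp_powr_real I0_def)
  finally have "E t powr (1/p) \<le> exp (- (2 * a / p) * t) * Lp_norm p x0" .
  moreover have "Lp_norm p (x t) \<le> 2 * (D' + E t powr (1/p))"
    unfolding E_def by (rule Lp_norm_le_integral_excess_powr[OF cxs[OF t] p D'])
  ultimately show "Lp_norm p (x t) \<le> 2 * exp (- (2 * a / p) * t) * Lp_norm p x0 + 2 * D + \<epsilon>"
    by (simp add: D'_def algebra_simps)
qed

lemma Lp_norm_solution_le_SUP:
  fixes x :: "real \<Rightarrow> real \<Rightarrow> real"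
  assumes a: "a \<ge> 0" and p: "p > 2" and adm: "admissible x0 d0 d1"
    and sol: "classical_solution a x0 d0 d1 x" and t: "t \<ge> 0"
  shows "Lp_norm p (x t) \<le> 2 * exp (- (2 * a / p) * t) * Lp_norm p x0
           + 2 * (SUP s\<in>{0..t}. \<bar>d0 s\<bar>) + 2 * (SUP s\<in>{0..t}. \<bar>d1 s\<bar>)"
proof -
  define S0 where "S0 = (SUP s\<in>{0..t}. \<bar>d0 s\<bar>)"
  define S1 where "S1 = (SUP s\<in>{0..t}. \<bar>d1 s\<bar>)"
  have S: "\<bar>d0 s\<bar> \<le> S0" "\<bar>d1 s\<bar> \<le> S1" if "s \<in> {0..t}" for s
    using adm that by (auto simp: admissible_def S0_def S1_def intro: abs_le_SUP_abs)
  have "S0 \<ge> 0" "S1 \<ge> 0"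
    using S[of 0] t by (auto intro: order_trans[OF abs_ge_zero])
  with S have "\<And>s. s \<in> {0..t} \<Longrightarrow> \<bar>d0 s\<bar> \<le> S0 + S1 \<and> \<bar>d1 s\<bar> \<le> S0 + S1"
    by fastforce
  from Lp_norm_solution_le[OF a p sol t this] show ?thesis
    by (simp add: S0_def S1_def)
qed

theorem mainTheorem9:
  fixes a :: real
  assumes "a > 0"
  shows "\<forall>p::real. p > 2 \<longrightarrow>
    (\<exists>M \<sigma> \<gamma> :: real. M > 0 \<and> \<sigma> > 0 \<and> \<gamma> > 0 \<and>
      (\<forall>x0 d0 d1 (x :: real \<Rightarrow> real \<Rightarrow> real) t.
         C2_on {0..1} x0 \<longrightarrow> admissible x0 d0 d1 \<longrightarrow>
         classical_solution a x0 d0 d1 x \<longrightarrow> t \<ge> 0 \<longrightarrow>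
         Lp_norm p (x t) \<le> M * exp (- \<sigma> * t) * Lp_norm p x0
            + \<gamma> * (SUP s\<in>{0..t}. \<bar>d0 s\<bar>) + \<gamma> * (SUP s\<in>{0..t}. \<bar>d1 s\<bar>)))"
  using assms Lp_norm_solution_le_SUP[OF less_imp_le[OF assms]]
  by (intro allI impI, rule_tac x=2 in exI, rule_tac x="2 * a / p" in exI, rule_tac x=2 in exI) auto

end
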